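(* Let $P\subset\mathbb R^d$ be a $d$-polytope with $d\geq 3$, let $S$ be a simplex facet of $P$ in bounded position, and let $\mathcal F,\mathcal N\subseteq\operatorname{adj}(S)$ be disjoint with $\mathcal F$ nonsimple. Let $v\in V_S(\mathcal F,\mathcal N;P)$ and $Q=\operatorname{conv}(P\cup\{v\})$. Then for $0\leq k\leq d-2$, a $k$-face $G$ of $P$ is a $k$-face of $Q$ if and only if there is a facet $F$ of $P$ with $F\notin\mathcal F\cup\mathcal N\cup\{S\}$ and $G\subseteq F$.
   Context: For a facet $F$ of a $d$-polytope $P\subset\mathbb R^d$ let $H_F=\{x:\langle x,a_F\rangle=\ell_F\}$ be its affine hull, oriented so that $P\subseteq\{x:\langle x,a_F\rangle\geq \ell_F\}$; put $H_F^+=\{x:\langle x,a_F\rangle>\ell_F\}$, $H_F^-=\{x:\langle x,a_F\rangle<\ell_F\}$. Two facets are adjacent if they share a ridge ($(d-2)$-face); $\operatorname{adj}(S)$ is the set of facets adjacent to the facet $S$. A simplex facet is a facet combinatorially equivalent to a $(d-1)$-simplex. A facet $S$ is in bounded position if for every set of $d$ facets in $\operatorname{adj}(S)$ the hyperplanes $H_F$ of these facets intersect in a point of $H_S^-$. A subset $\mathcal F\subseteq\operatorname{adj}(S)$ is nonsimple if there is no pair of adjacent facets $G,G'\in\mathcal F$ having a common $(d-3)$-face with $S$. For disjoint $\mathcal F,\mathcal N\subseteq\operatorname{adj}(S)$, $V_S(\mathcal F,\mathcal N;P)$ is the set of points lying in $H_F^-$ for all $F\in\mathcal N\cup\{S\}$,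 in $H_F$ for all $F\in\mathcal F$, and in $H_F^+$ for all other facets $F$ of $P$. (The polytope $Q$ is called the pseudo-stacking of $P$ above $S$ with respect to $\mathcal F,\mathcal N$.) *)

theory Defs
  imports "HOL-Analysis.Analysis"
begin

definition hplus :: "'a::euclidean_space set \<Rightarrow> 'a set \<Rightarrow> 'a set" where
  "hplus P F = {x. \<exists>a l. a \<noteq> 0 \<and> affine hull F = {y. a \<bullet> y = l} \<and>
                      P \<subseteq> {y. a \<bullet> y \<ge> l} \<and> a \<bullet> x > l}"

definition hminus :: "'a::euclidean_space set \<Rightarrow> 'a set \<Rightarrow> 'a set" where
  "hminus P F = {x. \<exists>a l. a \<noteq> 0 \<and> affine hull F = {y. a \<bullet> y = l} \<and>
                      P \<subseteq> {y. a \<bullet> y \<ge> l} \<and> a \<bullet> x < l}"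

definition adjacent_facets :: "'a::euclidean_space set \<Rightarrow> 'a set \<Rightarrow> 'a set \<Rightarrow> bool" where
  "adjacent_facets P F G \<longleftrightarrow> F facet_of P \<and> G facet_of P \<and> F \<noteq> G \<and>
     (F \<inter> G) face_of P \<and> aff_dim (F \<inter> G) = aff_dim P - 2"

definition adj :: "'a::euclidean_space set \<Rightarrow> 'a set \<Rightarrow> 'a set set" where
  "adj P S = {F. adjacent_facets P S F}"

definition comb_equiv :: "'a::euclidean_space set \<Rightarrow> 'a set \<Rightarrow> bool" where
  "comb_equiv A B \<longleftrightarrow> (\<exists>f. bij_betw f {X. X face_of A} {Y. Y face_of B} \<and>
     (\<forall>X Y. X face_of A \<longrightarrow> Y face_of A \<longrightarrow> (X \<subseteq> Y \<longleftrightarrow> f X \<subseteq> f Y)))"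

definition simplex_facet :: "'a::euclidean_space set \<Rightarrow> 'a set \<Rightarrow> bool" where
  "simplex_facet P S \<longleftrightarrow> S facet_of P \<and>
     (\<exists>T. (int DIM('a) - 1) simplex T \<and> comb_equiv S T)"

definition bounded_position :: "'a::euclidean_space set \<Rightarrow> 'a set \<Rightarrow> bool" where
  "bounded_position P S \<longleftrightarrow>
     (\<forall>X. X \<subseteq> adj P S \<and> card X = DIM('a) \<longrightarrow>
        (\<exists>p. \<Inter> ((\<lambda>F. affine hull F) ` X) = {p} \<and> p \<in> hminus P S))"

definition nonsimple :: "'a::euclidean_space set \<Rightarrow> 'a set \<Rightarrow> 'a set set \<Rightarrow> bool" where
  "nonsimple P S \<F> \<longleftrightarrow>
     \<not> (\<exists>G\<in>\<F>. \<exists>G'\<in>\<F>. adjacent_facets P G G' \<and>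
          (G \<inter> G' \<inter> S) face_of P \<and> aff_dim (G \<inter> G' \<inter> S) = int DIM('a) - 3)"

definition VS :: "'a::euclidean_space set \<Rightarrow> 'a set \<Rightarrow> 'a set set \<Rightarrow> 'a set set \<Rightarrow> 'a set" where
  "VS P S \<F> \<N> = {x. (\<forall>F \<in> insert S \<N>. x \<in> hminus P F) \<and>
                     (\<forall>F \<in> \<F>. x \<in> affine hull F) \<and>
                     (\<forall>F. F facet_of P \<and> F \<notin> insert S (\<F> \<union> \<N>) \<longrightarrow> x \<in> hplus P F)}"

end

theory Submission
  imports Defs
begin

text \<open>A nonempty face G of a full-dimensional polytope P is still a face of
  conv(P \<union> {v}) exactly when v lies strictly beneath some facet F \<supseteq> G of P. If so,
  subtracting a large multiple of the inequality of F from an inequality exposing G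
  yields an inequality valid on P that still exposes G and holds strictly at v, so it
  exposes G in conv(P \<union> {v}). If not, take g in the relative interior of G: every facet
  inequality tight at g is tight at or violated by v, so points slightly beyond g on the
  ray from v through g lie in P, and g is interior to a segment of conv(P \<union> {v}) ending
  at v \<notin> G. By definition of VS, v lies strictly beneath exactly the facets outside
  \<F> \<union> \<N> \<union> {S}; here full-dimensionality makes the orientation of each facet
  hyperplane unique.\<close>

lemma hyperplane_eq_imp_scaled:
  fixes a a' :: "'a::euclidean_space"
  assumes "a \<noteq> 0" and eq: "{x. a \<bullet> x = b} = {x. a' \<bullet> x = b'}"
  obtains k where "a' = k *\<^sub>R a" "b' = k * b"
proof -
  define k where "k = (a' \<bullet> a) / (a \<bullet> a)"
  define x0 where "x0 = (b / (a \<bullet> a)) *\<^sub>R a"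
  define u where "u = a' - k *\<^sub>R a"
  have x0: "a \<bullet> x0 = b" and au: "a \<bullet> u = 0"
    using assms(1) by (simp_all add: x0_def u_def k_def inner_diff_right inner_commute)
  have "a \<bullet> (x0 + u) = b"
    using x0 au by (simp add: inner_add_right)
  then have "a' \<bullet> x0 = b'" "a' \<bullet> (x0 + u) = b'"
    using eq x0 by blast+
  then have "u \<bullet> u = 0"
    using au by (simp add: u_def inner_add_right inner_diff_left inner_commute)
  then have "a' = k *\<^sub>R a"
    by (simp add: u_def)
  moreover have "b' = k * b"
    using \<open>a' \<bullet> x0 = b'\<close> x0 calculation by simp
  ultimately show thesis
    using that by blast
qed

lemma hplus_Int_hminus_eq_empty:
  fixes P :: "'a::euclidean_space set"
  assumes "aff_dim P = DIM('a)"
  shows "hplus P F \<inter> hminus P F = {}"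
proof (intro equals0I)
  fix v assume "v \<in> hplus P F \<inter> hminus P F"
  then obtain a l a' l' where
      a: "a \<noteq> 0" "affine hull F = {y. a \<bullet> y = l}" "P \<subseteq> {y. a \<bullet> y \<ge> l}" "a \<bullet> v > l"
    and a': "affine hull F = {y. a' \<bullet> y = l'}" "P \<subseteq> {y. a' \<bullet> y \<ge> l'}" "a' \<bullet> v < l'"
    unfolding hplus_def hminus_def by blast
  obtain k where k: "a' = k *\<^sub>R a" "l' = k * l"
    using hyperplane_eq_imp_scaled[OF a(1)] a(2) a'(1) by metis
  have "k < 0"
  proof (rule ccontr)
    assume "\<not> k < 0"
    then have "k * l \<le> k * (a \<bullet> v)"
      using a(4) by (simp add: mult_left_mono)
    then show False
      using a'(3) k by simp
  qed
  have "a \<bullet> y = l" if "y \<in> P" for y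
    using that a(3) a'(2) k \<open>k < 0\<close> by (force simp: mult_le_cancel_left)
  then have "P \<subseteq> {y. a \<bullet> y = l}"
    by blast
  then have "aff_dim P \<le> aff_dim {y. a \<bullet> y = l}"
    by (rule aff_dim_subset)
  then show False
    using assms a(1) by simp
qed

lemma convex_hull_insert_Int_hyperplane:
  assumes "convex P" "P \<subseteq> {x. c \<bullet> x \<le> d}" "c \<bullet> v < d"
  shows "convex hull (insert v P) \<inter> {x. c \<bullet> x = d} = P \<inter> {x. c \<bullet> x = d}"
proof
  show "P \<inter> {x. c \<bullet> x = d} \<subseteq> convex hull (insert v P) \<inter> {x. c \<bullet> x = d}"
    by (auto intro: hull_inc)
  show "convex hull (insert v P) \<inter> {x. c \<bullet> x = d} \<subseteq> P \<inter> {x. c \<bullet> x = d}"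
  proof (cases "P = {}")
    case False
    have "(1 - u) *\<^sub>R v + u *\<^sub>R y \<in> P"
      if "0 \<le> u" "u \<le> 1" "y \<in> P" "c \<bullet> ((1 - u) *\<^sub>R v + u *\<^sub>R y) = d" for u y
    proof -
      have "(1 - u) * (c \<bullet> v) + u * (c \<bullet> y) = d"
        using that(4) by (simp add: inner_add_right)
      moreover have "u * (c \<bullet> y) \<le> u * d"
        using assms(2) that by (auto intro: mult_left_mono)
      ultimately have "(1 - u) * (d - c \<bullet> v) \<le> 0"
        by (simp add: algebra_simps)
      then have "u = 1"
        using assms(3) that(2) by (simp add: mult_le_0_iff)
      then show ?thesis
        using that by simp
    qed
    moreover have "convex hull P = P"
      using assms(1) by (rule convex_hull_eq[THEN iffD2])
    ultimately show ?thesis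
      using False by (auto simp: convex_hull_insert_alt)
  qed (use assms(3) in auto)
qed

lemma tilt_exposing_hyperplane:
  fixes a a0 v :: "'a::real_inner"
  assumes "P \<subseteq> {x. a0 \<bullet> x \<le> l0}" "G = P \<inter> {x. a0 \<bullet> x = l0}"
    and "P \<subseteq> {x. a \<bullet> x \<ge> l}" "G \<subseteq> {x. a \<bullet> x = l}" "a \<bullet> v > l"
  obtains c d where "P \<subseteq> {x. c \<bullet> x \<le> d}" "c \<bullet> v < d" "G = P \<inter> {x. c \<bullet> x = d}"
proof -
  define t where "t = max 0 ((a0 \<bullet> v - l0) / (a \<bullet> v - l)) + 1"
  have "t > 0"
    by (simp add: t_def)
  have "(a0 \<bullet> v - l0) / (a \<bullet> v - l) < t"
    by (simp add: t_def)
  then have tv: "a0 \<bullet> v - l0 < t * (a \<bullet> v - l)"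
    using assms(5) by (simp add: divide_less_eq)
  define c where "c = a0 - t *\<^sub>R a"
  define d where "d = l0 - t * l"
  have c_eq: "c \<bullet> x - d = (a0 \<bullet> x - l0) - t * (a \<bullet> x - l)" for x
    by (simp add: c_def d_def inner_diff_left algebra_simps)
  have sign: "a0 \<bullet> x - l0 \<le> 0" "0 \<le> t * (a \<bullet> x - l)" if "x \<in> P" for x
    using that assms(1,3) \<open>t > 0\<close> by auto
  have "c \<bullet> x \<le> d" if "x \<in> P" for x
    using sign[OF that] c_eq[of x] by simp
  then have "P \<subseteq> {x. c \<bullet> x \<le> d}"
    by blast
  moreover have "c \<bullet> v < d"
    using tv c_eq[of v] by simp
  moreover have "G = P \<inter> {x. c \<bullet> x = d}"
  proof
    show "P \<inter> {x. c \<bullet> x = d} \<subseteq> G"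
    proof
      fix x assume "x \<in> P \<inter> {x. c \<bullet> x = d}"
      then have "x \<in> P" "c \<bullet> x = d"
        by auto
      then have "a0 \<bullet> x = l0"
        using sign[of x] c_eq[of x] by linarith
      then show "x \<in> G"
        using \<open>x \<in> P\<close> assms(2) by simp
    qed
    show "G \<subseteq> P \<inter> {x. c \<bullet> x = d}"
    proof
      fix x assume "x \<in> G"
      then have "x \<in> P" "a0 \<bullet> x = l0" "a \<bullet> x = l"
        using assms(2,4) by auto
      then show "x \<in> P \<inter> {x. c \<bullet> x = d}"
        using c_eq[of x] by simp
    qed
  qed
  ultimately show thesis
    using that by blast
qed

lemma face_of_convex_hull_insert_if_hplus:
  fixes P :: "'a::euclidean_space set"
  assumes "polyhedron P" "G face_of P" "F facet_of P" "G \<subseteq> F" "v \<in> hplus P F"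
  shows "G face_of convex hull (insert v P)"
proof -
  obtain a l where a: "affine hull F = {y. a \<bullet> y = l}" "P \<subseteq> {y. a \<bullet> y \<ge> l}" "a \<bullet> v > l"
    using assms(5) unfolding hplus_def by blast
  have "G \<subseteq> affine hull F"
    using assms(4) hull_subset by (rule subset_trans)
  then have "G \<subseteq> {x. a \<bullet> x = l}"
    by (simp only: a(1))
  have "G exposed_face_of P"
    using assms(1,2) exposed_face_of_polyhedron by blast
  then obtain a0 l0 where "P \<subseteq> {x. a0 \<bullet> x \<le> l0}" "G = P \<inter> {x. a0 \<bullet> x = l0}"
    unfolding exposed_face_of_def by blast
  then obtain c d where cd: "P \<subseteq> {x. c \<bullet> x \<le> d}" "c \<bullet> v < d" "G = P \<inter> {x. c \<bullet> x = d}"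
    using a(2) \<open>G \<subseteq> {x. a \<bullet> x = l}\<close> a(3) by (rule tilt_exposing_hyperplane)
  have "G = convex hull (insert v P) \<inter> {x. c \<bullet> x = d}"
    using convex_hull_insert_Int_hyperplane[OF polyhedron_imp_convex[OF assms(1)] cd(1,2)] cd(3)
    by simp
  moreover have "convex hull (insert v P) \<subseteq> {x. c \<bullet> x \<le> d}"
    by (rule hull_minimal) (use cd(1,2) in \<open>auto simp: convex_halfspace_le\<close>)
  ultimately show ?thesis
    using face_of_Int_supporting_hyperplane_le by fastforce
qed

lemma eventually_inner_le_along_ray:
  fixes a g v :: "'a::real_inner"
  assumes "a \<bullet> g \<le> b" and "a \<bullet> g = b \<Longrightarrow> b \<le> a \<bullet> v"
  shows "\<forall>\<^sub>F e in at_right 0. a \<bullet> (g + e *\<^sub>R (g - v)) \<le> b"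
proof (cases "a \<bullet> g = b")
  case True
  have "a \<bullet> (g + e *\<^sub>R (g - v)) \<le> b" if "e > 0" for e
  proof -
    have "a \<bullet> (g + e *\<^sub>R (g - v)) = b + e * (b - a \<bullet> v)"
      using True by (simp add: inner_add_right inner_diff_right)
    also have "\<dots> \<le> b"
      using assms(2)[OF True] that by (simp add: mult_nonneg_nonpos)
    finally show ?thesis .
  qed
  then show ?thesis
    using eventually_at_right_less by (rule eventually_mono[rotated]) auto
next
  case False
  have "((\<lambda>e. a \<bullet> (g + e *\<^sub>R (g - v))) \<longlongrightarrow> a \<bullet> (g + 0 *\<^sub>R (g - v))) (at_right 0)"
    by (intro tendsto_intros)
  then have "\<forall>\<^sub>F e in at_right 0. a \<bullet> (g + e *\<^sub>R (g - v)) < b"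
    using assms(1) False by (intro order_tendstoD(2)) auto
  then show ?thesis
    by eventually_elim simp
qed

lemma affine_hull_facet_eq_hyperplane:
  fixes P :: "'a::euclidean_space set"
  assumes "aff_dim P = DIM('a)" "C facet_of P" "C \<subseteq> {x. a \<bullet> x = b}" "a \<noteq> 0"
  shows "affine hull C = {x. a \<bullet> x = b}"
proof (rule affine_dim_equal)
  show "affine hull C \<subseteq> {x. a \<bullet> x = b}"
    using assms(3) affine_hyperplane by (rule hull_minimal)
  show "aff_dim (affine hull C) = aff_dim {x. a \<bullet> x = b}"
    using assms by (simp add: facet_of_def)
  show "affine hull C \<noteq> {}"
    using assms(2) by (simp add: facet_of_def)
qed (simp_all add: affine_hyperplane)

lemma full_dim_polyhedron_facet_halfspaces:
  fixes P :: "'a::euclidean_space set"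
  assumes "polyhedron P" "aff_dim P = DIM('a)"
  obtains hs :: "'a set set" and A B where "finite hs" "P = {x. \<forall>h\<in>hs. A h \<bullet> x \<le> B h}"
    and "\<And>h. h \<in> hs \<Longrightarrow> A h \<noteq> 0 \<and> P \<inter> {x. A h \<bullet> x = B h} facet_of P"
proof -
  obtain hs where hs: "finite hs" "P = affine hull P \<inter> \<Inter>hs"
     "\<forall>h\<in>hs. \<exists>a b. a \<noteq> 0 \<and> h = {x. a \<bullet> x \<le> b}"
     "\<And>hs'. hs' \<subset> hs \<Longrightarrow> P \<subset> affine hull P \<inter> \<Inter>hs'"
    using assms(1) polyhedron_Int_affine_minimal by metis
  obtain A B where AB: "\<And>h. h \<in> hs \<Longrightarrow> A h \<noteq> 0 \<and> h = {x. A h \<bullet> x \<le> B h}"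
    using hs(3) by metis
  have mem_h: "x \<in> h \<longleftrightarrow> A h \<bullet> x \<le> B h" if "h \<in> hs" for h x
    using AB[OF that] by auto
  have "affine hull P = UNIV"
    using assms(2) aff_dim_eq_full by blast
  then have "P = \<Inter>hs"
    using hs(2) by simp
  then have "P = {x. \<forall>h\<in>hs. A h \<bullet> x \<le> B h}"
    using mem_h by blast
  moreover have "P \<inter> {x. A h \<bullet> x = B h} facet_of P" if "h \<in> hs" for h
    using facet_of_polyhedron_explicit[OF hs(1,2) AB hs(4)] that by blast
  ultimately show thesis
    using that[OF hs(1)] AB by blast
qed

lemma in_open_segment_ray:
  fixes g v :: "'a::real_vector"
  assumes "g \<noteq> v" "e > 0"
  shows "g \<in> open_segment (g + e *\<^sub>R (g - v)) v"
proof -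
  define u where "u = e / (1 + e)"
  have "0 < u" "u < 1"
    using assms(2) by (auto simp: u_def)
  have "(1 - u) * (1 + e) = 1" "(1 - u) * e = u"
    using assms(2) by (simp_all add: u_def field_simps)
  moreover have "(1 - u) *\<^sub>R (g + e *\<^sub>R (g - v)) = ((1 - u) * (1 + e)) *\<^sub>R g - ((1 - u) * e) *\<^sub>R v"
    by (simp add: algebra_simps)
  ultimately have "g = (1 - u) *\<^sub>R (g + e *\<^sub>R (g - v)) + u *\<^sub>R v"
    by simp
  moreover have "g + e *\<^sub>R (g - v) - v = (1 + e) *\<^sub>R (g - v)"
    by (simp add: algebra_simps)
  then have "g + e *\<^sub>R (g - v) \<noteq> v"
    using assms by auto
  ultimately show ?thesis
    using \<open>0 < u\<close> \<open>u < 1\<close> by (auto simp: in_segment)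
qed

lemma inner_ge_if_not_hplus_facet:
  fixes P :: "'a::euclidean_space set"
  assumes "aff_dim P = DIM('a)" "P \<subseteq> {x. a \<bullet> x \<le> b}" "a \<noteq> 0"
    and "(P \<inter> {x. a \<bullet> x = b}) facet_of P" "v \<notin> hplus P (P \<inter> {x. a \<bullet> x = b})"
  shows "b \<le> a \<bullet> v"
proof (rule ccontr)
  assume "\<not> b \<le> a \<bullet> v"
  have "affine hull (P \<inter> {x. a \<bullet> x = b}) = {x. (- a) \<bullet> x = - b}"
    using affine_hull_facet_eq_hyperplane[OF assms(1,4) _ assms(3)] by auto
  then have "v \<in> hplus P (P \<inter> {x. a \<bullet> x = b})"
    unfolding hplus_def using assms(2,3) \<open>\<not> b \<le> a \<bullet> v\<close>
    by (intro CollectI exI[of _ "- a"] exI[of _ "- b"]) auto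
  with assms(5) show False
    by blast
qed

lemma hplus_facet_if_face_of_convex_hull_insert:
  fixes P :: "'a::euclidean_space set"
  assumes "polyhedron P" "aff_dim P = DIM('a)" "G face_of P" "G \<noteq> {}" "v \<notin> P"
    and "G face_of convex hull (insert v P)"
  shows "\<exists>F. F facet_of P \<and> G \<subseteq> F \<and> v \<in> hplus P F"
proof (rule ccontr)
  assume no_hplus: "\<nexists>F. F facet_of P \<and> G \<subseteq> F \<and> v \<in> hplus P F"
  obtain hs :: "'a set set" and A B
    where "finite hs" and P_eq: "P = {x. \<forall>h\<in>hs. A h \<bullet> x \<le> B h}"
    and facets: "\<And>h. h \<in> hs \<Longrightarrow> A h \<noteq> 0 \<and> P \<inter> {x. A h \<bullet> x = B h} facet_of P"
    using full_dim_polyhedron_facet_halfspaces[OF assms(1,2)] by blast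
  obtain g where g: "g \<in> rel_interior G"
    using assms(3,4) face_of_imp_convex rel_interior_eq_empty by blast
  have "G \<subseteq> P"
    using assms(3) face_of_imp_subset by blast
  then have "g \<in> P"
    using g rel_interior_subset by blast
  have tight: "B h \<le> A h \<bullet> v" if "h \<in> hs" "A h \<bullet> g = B h" for h
  proof (rule inner_ge_if_not_hplus_facet[OF assms(2)])
    show "P \<subseteq> {x. A h \<bullet> x \<le> B h}" "A h \<noteq> 0" and C: "P \<inter> {x. A h \<bullet> x = B h} facet_of P"
      using P_eq facets that(1) by auto
    have "G \<subseteq> P \<inter> {x. A h \<bullet> x = B h}"
      using subset_of_face_of[OF facet_of_imp_face_of[OF C] \<open>G \<subseteq> P\<close>] g \<open>g \<in> P\<close> that(2)
      by auto
    then show "v \<notin> hplus P (P \<inter> {x. A h \<bullet> x = B h})"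
      using no_hplus C by blast
  qed
  have "\<forall>\<^sub>F e in at_right 0. A h \<bullet> (g + e *\<^sub>R (g - v)) \<le> B h" if "h \<in> hs" for h
  proof (rule eventually_inner_le_along_ray)
    show "A h \<bullet> g \<le> B h"
      using \<open>g \<in> P\<close> P_eq that by blast
  qed (use tight that in blast)
  then have "\<forall>\<^sub>F e in at_right 0. \<forall>h\<in>hs. A h \<bullet> (g + e *\<^sub>R (g - v)) \<le> B h"
    using \<open>finite hs\<close> by (simp add: eventually_ball_finite_distrib)
  with eventually_at_right_less
  have "\<forall>\<^sub>F e in at_right 0. 0 < e \<and> (\<forall>h\<in>hs. A h \<bullet> (g + e *\<^sub>R (g - v)) \<le> B h)"
    by (rule eventually_conj)
  then obtain e :: real where "e > 0" and "\<forall>h\<in>hs. A h \<bullet> (g + e *\<^sub>R (g - v)) \<le> B h"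
    using eventually_happens'[OF trivial_limit_at_right_real] by blast
  then have "g + e *\<^sub>R (g - v) \<in> P"
    using P_eq by simp
  moreover have "g \<in> open_segment (g + e *\<^sub>R (g - v)) v"
    using \<open>g \<in> P\<close> assms(5) \<open>e > 0\<close> by (intro in_open_segment_ray) auto
  ultimately have "v \<in> G"
    using face_ofD[OF assms(6)] g rel_interior_subset
    by (meson hull_inc insertI1 insertI2 subsetD)
  then show False
    using \<open>G \<subseteq> P\<close> assms(5) by blast
qed

lemma VS_disjoint:
  "VS P S \<F> \<N> \<inter> P = {}"
  unfolding VS_def hminus_def by force

lemma VS_hplus_iff:
  fixes P :: "'a::euclidean_space set"
  assumes "aff_dim P = DIM('a)" "v \<in> VS P S \<F> \<N>" "F facet_of P"
  shows "v \<in> hplus P F \<longleftrightarrow> F \<notin> \<F> \<union> \<N> \<union> {S}"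
proof
  assume "v \<in> hplus P F"
  moreover have "v \<notin> hplus P F" if "F \<in> \<F>"
    using assms(2) that unfolding VS_def hplus_def by force
  moreover have "v \<notin> hplus P F" if "F \<in> insert S \<N>"
    using assms(2) that hplus_Int_hminus_eq_empty[OF assms(1)] unfolding VS_def by blast
  ultimately show "F \<notin> \<F> \<union> \<N> \<union> {S}"
    by blast
qed (use assms(2,3) in \<open>auto simp: VS_def\<close>)

lemma face_of_convex_hull_insert_iff_hplus:
  fixes P :: "'a::euclidean_space set"
  assumes "polyhedron P" "aff_dim P = DIM('a)" "G face_of P" "G \<noteq> {}" "v \<notin> P"
  shows "G face_of convex hull (insert v P) \<longleftrightarrow> (\<exists>F. F facet_of P \<and> G \<subseteq> F \<and> v \<in> hplus P F)"
  using assms face_of_convex_hull_insert_if_hplus hplus_facet_if_face_of_convex_hull_insert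
  by blast

text \<open>Only full-dimensionality of P and the position of v prescribed by VS enter the
  proof.\<close>

theorem theorem2p11:
  fixes P :: "'a::euclidean_space set" and S :: "'a set"
    and \<F> \<N> :: "'a set set" and v :: 'a
  assumes "DIM('a) \<ge> 3"
    and "polytope P" and "aff_dim P = int DIM('a)"
    and "simplex_facet P S" and "bounded_position P S"
    and "\<F> \<subseteq> adj P S" and "\<N> \<subseteq> adj P S" and "\<F> \<inter> \<N> = {}"
    and "nonsimple P S \<F>"
    and "v \<in> VS P S \<F> \<N>"
  shows "\<forall>k G. 0 \<le> k \<and> k \<le> int DIM('a) - 2 \<and> G face_of P \<and> aff_dim G = k \<longrightarrow>
           ((G face_of convex hull (insert v P) \<and> aff_dim G = k) \<longleftrightarrow>
            (\<exists>F. F facet_of P \<and> F \<notin> \<F> \<union> \<N> \<union> {S} \<and> G \<subseteq> F))"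
proof (intro allI impI)
  fix k G
  assume kG: "0 \<le> k \<and> k \<le> int DIM('a) - 2 \<and> G face_of P \<and> aff_dim G = k"
  then have "G \<noteq> {}"
    by auto
  have "v \<notin> P"
    using assms(10) VS_disjoint by blast
  have "G face_of convex hull (insert v P) \<longleftrightarrow> (\<exists>F. F facet_of P \<and> G \<subseteq> F \<and> v \<in> hplus P F)"
    using polytope_imp_polyhedron[OF assms(2)] assms(3) kG \<open>G \<noteq> {}\<close> \<open>v \<notin> P\<close>
    by (intro face_of_convex_hull_insert_iff_hplus) auto
  also have "\<dots> \<longleftrightarrow> (\<exists>F. F facet_of P \<and> F \<notin> \<F> \<union> \<N> \<union> {S} \<and> G \<subseteq> F)"
    using VS_hplus_iff[OF assms(3,10)] by blast
  finally show "(G face_of convex hull (insert v P) \<and> aff_dim G = k) \<longleftrightarrow>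
      (\<exists>F. F facet_of P \<and> F \<notin> \<F> \<union> \<N> \<union> {S} \<and> G \<subseteq> F)"
    using kG by blast
qed

end
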